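(* Let $0<\kappa<1$. For $\phi$ near $0$ define $$u(\phi)=\int_0^{\phi} F\!\left(\tfrac14,\tfrac34;\tfrac12;\kappa^2\sin^2\theta\right)\,\mathrm{d}\theta ,$$ let $u\mapsto\phi(u)$ be the local inverse near $0$ with $\phi(0)=0$, let $\psi=\psi(u)$ be defined near $u=0$ with $\psi(0)=0$ and $\sin\psi=\kappa\sin\phi$, and set $d=\cos\psi$. Then, near $u=0$, $$d'=-2\kappa\sin\tfrac12\psi\,\cos\phi,$$ where $'$ denotes differentiation with respect to $u$.
   Context: $F(a,b;c;z)$ denotes the Gauss hypergeometric function ${}_2F_1(a,b;c;z)$. *)

theory Defs
  imports "HOL-Analysis.Analysis"
begin

definition hyp2f1 :: "real \<Rightarrow> real \<Rightarrow> real \<Rightarrow> real \<Rightarrow> real" where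
  "hyp2f1 a b c z =
     (\<Sum>n. pochhammer a n * pochhammer b n / (pochhammer c n * fact n) * z ^ n)"

definition uint :: "real \<Rightarrow> real \<Rightarrow> real" where
  "uint \<kappa> \<phi> =
     (let f = (\<lambda>\<theta>. hyp2f1 (1/4) (3/4) (1/2) (\<kappa>^2 * (sin \<theta>)^2))
      in if 0 \<le> \<phi> then integral {0..\<phi>} f else - integral {\<phi>..0} f)"

end

theory Submission
  imports Defs
begin

text \<open>
  For \<open>\<bar>x\<bar> < 1\<close> the series \<open>F(1/4,3/4;1/2;x\<^sup>2)\<close> is the even part of the binomial
  series of \<open>(1 - x) powr (-1/2)\<close>, by the duplication formula for Pochhammer symbols, so
  it equals \<open>((1 - x) powr (-1/2) + (1 + x) powr (-1/2)) / 2\<close>. Hence \<open>\<phi>' = 1 / G\<close> with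
  \<open>G\<close> this mean taken at \<open>x = \<kappa> sin \<phi> = sin \<psi>\<close>, and differentiating \<open>cos \<psi> = sqrt (1 - \<kappa>\<^sup>2 sin\<^sup>2 \<phi>)\<close>
  gives \<open>d' = - \<kappa> cos \<phi> sin \<psi> / (G cos \<psi>)\<close>. Finally \<open>1 \<plusminus> sin \<psi> = (cos (\<psi>/2) \<plusminus> sin (\<psi>/2))\<^sup>2\<close>
  yields \<open>G cos \<psi> = cos (\<psi>/2)\<close>, and \<open>sin \<psi> = 2 sin (\<psi>/2) cos (\<psi>/2)\<close> finishes the computation.
\<close>

lemma pochhammer_half_double_div_fact:
  "pochhammer (1/2) (2*n) / fact (2*n) =
     pochhammer (1/4) n * pochhammer (3/4) n / (pochhammer (1/2) n * fact n :: 'a::field_char_0)"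
proof -
  have "pochhammer (1/2 :: 'a) (2*n) = 2^(2*n) * pochhammer (1/4) n * pochhammer (3/4) n"
    using pochhammer_double[of "1/4 :: 'a" n] by simp
  then show ?thesis
    by (simp add: fact_double)
qed

lemma sums_powr_minus_half:
  fixes x :: real assumes "\<bar>x\<bar> < 1"
  shows "(\<lambda>k. pochhammer (1/2) k / fact k * x^k) sums (1 - x) powr (-1/2)"
proof -
  have "((-1/2) gchoose k) * (-x)^k = pochhammer (1/2) k / fact k * x^k" for k
  proof -
    have "((-1/2) gchoose k) * (-x)^k = ((-1)^k * (-1)^k) * (pochhammer (1/2) k / fact k * x^k)"
      by (simp add: gbinomial_pochhammer power_minus[of x])
    also have "(-1::real)^k * (-1)^k = 1"
      by (simp flip: power_add)
    finally show ?thesis by simp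
  qed
  then show ?thesis
    using gen_binomial_real[of "-x" "-1/2"] assms by simp
qed

lemma sums_even_part:
  fixes c :: "nat \<Rightarrow> 'a::real_normed_field"
  assumes "(\<lambda>k. c k * x^k) sums A" and "(\<lambda>k. c k * (-x)^k) sums B"
  shows "(\<lambda>n. c (2*n) * x^(2*n)) sums ((A + B) / 2)"
proof -
  define f where "f k = (c k * x^k + c k * (-x)^k) / 2" for k
  have "f sums ((A + B) / 2)"
    unfolding f_def by (intro sums_divide sums_add assms)
  moreover have "f k = 0" if "k \<notin> range (\<lambda>n. 2*n)" for k
  proof -
    have "odd k" using that by (metis evenE rangeI)
    then show ?thesis by (simp add: f_def)
  qed
  ultimately have "(\<lambda>n. f (2*n)) sums ((A + B) / 2)"
    by (subst sums_mono_reindex) (auto simp: strict_mono_def)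
  moreover have "f (2*n) = c (2*n) * x^(2*n)" for n
    by (simp add: f_def)
  ultimately show ?thesis by simp
qed

definition inv_sqrt_mean :: "real \<Rightarrow> real" where
  "inv_sqrt_mean x = ((1 - x) powr (-1/2) + (1 + x) powr (-1/2)) / 2"

lemma hyp2f1_quarter_square:
  fixes x :: real assumes "\<bar>x\<bar> < 1"
  shows "hyp2f1 (1/4) (3/4) (1/2) (x^2) = inv_sqrt_mean x"
proof -
  have "(\<lambda>k. pochhammer (1/2) k / fact k * (-x)^k) sums (1 + x) powr (-1/2)"
    using sums_powr_minus_half[of "-x"] assms by simp
  from sums_even_part[OF sums_powr_minus_half[OF assms] this]
  have "(\<lambda>n. pochhammer (1/4) n * pochhammer (3/4) n / (pochhammer (1/2) n * fact n) * (x^2)^n)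
          sums inv_sqrt_mean x"
    by (simp add: inv_sqrt_mean_def pochhammer_half_double_div_fact power_mult)
  then show ?thesis
    unfolding hyp2f1_def by (rule sums_unique[symmetric])
qed

lemma inv_sqrt_mean_pos: "\<bar>x\<bar> < 1 \<Longrightarrow> inv_sqrt_mean x > 0"
  unfolding inv_sqrt_mean_def by (intro divide_pos_pos add_pos_pos) auto

lemma continuous_on_inv_sqrt_mean: "continuous_on {-1<..<1} inv_sqrt_mean"
  unfolding inv_sqrt_mean_def by (intro continuous_intros) auto

lemma square_powr_minus_half:
  fixes c :: real assumes "c > 0"
  shows "(c^2) powr (-1/2) = inverse c"
proof -
  have "(c^2) powr (-1/2) = (c powr 2) powr (-1/2)"
    using assms by (simp add: powr_realpow)
  also have "\<dots> = inverse c"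
    using assms by (simp add: powr_powr powr_minus)
  finally show ?thesis .
qed

lemma inv_sqrt_mean_sin_mult_cos:
  fixes y :: real assumes "\<bar>y\<bar> < pi/2"
  shows "inv_sqrt_mean (sin y) * cos y = cos (y/2)"
proof -
  define a b where "a = cos (y/2)" and "b = sin (y/2)"
  have sy: "sin y = 2 * b * a" and cy: "cos y = (a + b) * (a - b)"
    using sin_double[of "y/2"] cos_double[of "y/2"]
    by (simp_all add: a_def b_def power2_eq_square algebra_simps)
  have pos: "a + b > 0" "a - b > 0"
  proof -
    have "a > 0"
      using assms by (auto simp: a_def intro!: cos_gt_zero_pi)
    moreover have "(a + b) * (a - b) > 0"
      using assms unfolding cy[symmetric] by (intro cos_gt_zero_pi) auto
    ultimately show "a + b > 0" "a - b > 0"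
      by (smt (verit) mult_nonneg_nonpos mult_nonpos_nonneg)+
  qed
  have "1 - sin y = (a - b)^2" "1 + sin y = (a + b)^2"
    using sin_cos_squared_add[of "y/2"] unfolding sy a_def b_def
    by (simp_all add: power2_eq_square algebra_simps)
  then have "inv_sqrt_mean (sin y) = (inverse (a - b) + inverse (a + b)) / 2"
    using pos unfolding inv_sqrt_mean_def by (simp only: square_powr_minus_half)
  then show ?thesis
    using pos unfolding cy a_def[symmetric] by (simp add: divide_simps mult.commute)
qed

lemma sin_div_inv_sqrt_mean_mult_cos:
  fixes y :: real assumes "\<bar>y\<bar> < pi/2"
  shows "sin y / (inv_sqrt_mean (sin y) * cos y) = 2 * sin (y/2)"
proof -
  have "sin y / (inv_sqrt_mean (sin y) * cos y) = 2 * sin (y/2) * cos (y/2) / cos (y/2)"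
    unfolding inv_sqrt_mean_sin_mult_cos[OF assms] using sin_double[of "y/2"] by simp
  also have "\<dots> = 2 * sin (y/2)"
    using assms by (simp add: cos_gt_zero_pi less_imp_neq[symmetric])
  finally show ?thesis .
qed

lemma oriented_integral_has_real_derivative:
  fixes f :: "real \<Rightarrow> real"
  assumes "continuous_on UNIV f"
  shows "((\<lambda>x. if 0 \<le> x then integral {0..x} f else - integral {x..0} f)
           has_real_derivative f p) (at p)"
proof -
  define a b where "a = - \<bar>p\<bar> - 1" and "b = \<bar>p\<bar> + 1"
  have ab: "a < p" "p < b" "a < 0"
    by (auto simp: a_def b_def)
  have int: "f integrable_on {c..d}" for c d
    by (rule integrable_continuous_real) (use assms continuous_on_subset in blast)
  have "((\<lambda>x. integral {a..x} f) has_real_derivative f p) (at p within {a..b})"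
    using ab by (intro integral_has_real_derivative continuous_on_subset[OF assms]) auto
  then have deriv: "((\<lambda>x. integral {a..x} f - integral {a..0} f) has_real_derivative f p) (at p)"
    using at_within_Icc_at[OF ab(1,2)] by (auto intro!: derivative_eq_intros)
  have eq: "integral {a..x} f - integral {a..0} f =
      (if 0 \<le> x then integral {0..x} f else - integral {x..0} f)" if "a < x" for x
  proof (cases "0 \<le> x")
    case True
    then show ?thesis
      using Henstock_Kurzweil_Integration.integral_combine[OF _ _ int, of a 0 x] ab by simp
  next
    case False
    then show ?thesis
      using Henstock_Kurzweil_Integration.integral_combine[OF _ _ int, of a x 0] that by simp
  qed
  show ?thesis
    using ab by (intro has_field_derivative_transform_within_open[OF deriv, of "{a<..}"]) (auto simp: eq)
qed

lemma abs_mult_sin_less_one: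
  fixes \<kappa> :: real assumes "\<bar>\<kappa>\<bar> < 1"
  shows "\<bar>\<kappa> * sin \<theta>\<bar> < 1"
proof -
  have "\<bar>\<kappa> * sin \<theta>\<bar> \<le> \<bar>\<kappa>\<bar>"
    by (simp add: abs_mult mult_left_le)
  then show ?thesis
    using assms by linarith
qed

lemma uint_has_real_derivative:
  assumes "\<bar>\<kappa>\<bar> < 1"
  shows "(uint \<kappa> has_real_derivative inv_sqrt_mean (\<kappa> * sin p)) (at p)"
proof -
  note bound = abs_mult_sin_less_one[OF assms]
  have hyp2f1_eq: "hyp2f1 (1/4) (3/4) (1/2) (\<kappa>^2 * (sin \<theta>)^2) = inv_sqrt_mean (\<kappa> * sin \<theta>)" for \<theta>
    using hyp2f1_quarter_square[OF bound] by (simp add: power_mult_distrib)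
  have "continuous_on UNIV (\<lambda>\<theta>. inv_sqrt_mean (\<kappa> * sin \<theta>))"
    using bound by (intro continuous_on_compose2[OF continuous_on_inv_sqrt_mean] continuous_intros)
                   (auto simp: abs_less_iff)
  then show ?thesis
    unfolding uint_def Let_def hyp2f1_eq by (rule oriented_integral_has_real_derivative)
qed

lemma DERIV_inverse_function_open:
  fixes f g :: "real \<Rightarrow> real"
  assumes "(f has_real_derivative D) (at (g x))" and "D \<noteq> 0"
    and "open T" and "x \<in> T" and "\<And>y. y \<in> T \<Longrightarrow> f (g y) = y" and "isCont g x"
  shows "(g has_real_derivative inverse D) (at x)"
proof -
  obtain e where "e > 0" and ball: "ball x e \<subseteq> T"
    using assms(3,4) open_contains_ball by blast
  show ?thesis
  proof (rule DERIV_inverse_function[where a = "x - e" and b = "x + e"])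
    fix y assume "x - e < y" "y < x + e"
    then have "y \<in> ball x e"
      by (simp add: dist_real_def)
    then show "f (g y) = y"
      using ball assms(5) by blast
  qed (use assms \<open>e > 0\<close> in auto)
qed

lemma has_real_derivative_cos_of_sin_eq:
  fixes g \<psi> :: "real \<Rightarrow> real"
  assumes "(g has_real_derivative D) (at x)" and "open T" and "x \<in> T"
    and "\<And>y. y \<in> T \<Longrightarrow> sin (\<psi> y) = g y \<and> \<bar>\<psi> y\<bar> < pi/2"
  shows "((\<lambda>y. cos (\<psi> y)) has_real_derivative - g x * D / cos (\<psi> x)) (at x)"
proof -
  have cos_eq: "cos (\<psi> y) = sqrt (1 - (g y)^2)" if "y \<in> T" for y
  proof -
    have "cos (\<psi> y) > 0"
      using assms(4)[OF that] by (intro cos_gt_zero_pi) auto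
    then show ?thesis
      using assms(4)[OF that] by (auto simp: cos_squared_eq intro!: real_sqrt_unique[symmetric])
  qed
  have "cos (\<psi> x) > 0"
    using assms(4)[OF assms(3)] by (intro cos_gt_zero_pi) auto
  then have "((\<lambda>y. sqrt (1 - (g y)^2)) has_real_derivative - g x * D / cos (\<psi> x)) (at x)"
    using cos_eq[OF assms(3)]
    by (auto intro!: derivative_eq_intros assms(1) simp: field_simps)
  then show ?thesis
    by (rule has_field_derivative_transform_within_open[OF _ assms(2,3)]) (simp add: cos_eq)
qed

lemma has_real_derivative_cos_of_uint_inverse:
  fixes \<kappa> :: real and phi psi :: "real \<Rightarrow> real"
  assumes "\<bar>\<kappa>\<bar> < 1" and "open T" and "u \<in> T" and "isCont phi u"
    and "\<And>v. v \<in> T \<Longrightarrow> uint \<kappa> (phi v) = v"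
    and "\<And>v. v \<in> T \<Longrightarrow> sin (psi v) = \<kappa> * sin (phi v) \<and> \<bar>psi v\<bar> < pi/2"
  shows "((\<lambda>v. cos (psi v)) has_real_derivative - 2 * \<kappa> * sin (psi u / 2) * cos (phi u)) (at u)"
proof -
  define G where "G = inv_sqrt_mean (sin (psi u))"
  have sin_psi: "sin (psi u) = \<kappa> * sin (phi u)"
    using assms(6)[OF assms(3)] ..
  have "G > 0"
    unfolding G_def sin_psi using assms(1) by (intro inv_sqrt_mean_pos abs_mult_sin_less_one)
  have "(uint \<kappa> has_real_derivative G) (at (phi u))"
    unfolding G_def sin_psi using assms(1) by (rule uint_has_real_derivative)
  then have "(phi has_real_derivative inverse G) (at u)"
    using \<open>G > 0\<close> assms(2-5) by (intro DERIV_inverse_function_open) auto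
  then have "((\<lambda>v. \<kappa> * sin (phi v)) has_real_derivative \<kappa> * cos (phi u) * inverse G) (at u)"
    by (auto intro!: derivative_eq_intros)
  from has_real_derivative_cos_of_sin_eq[OF this assms(2,3)] assms(6)
  have "((\<lambda>v. cos (psi v)) has_real_derivative
          - \<kappa> * cos (phi u) * (sin (psi u) / (G * cos (psi u)))) (at u)"
    using assms(3) by (simp add: field_simps)
  moreover have "sin (psi u) / (G * cos (psi u)) = 2 * sin (psi u / 2)"
    unfolding G_def using assms(6)[OF assms(3)] by (intro sin_div_inv_sqrt_mean_mult_cos) simp
  ultimately show ?thesis
    by (simp add: mult_ac)
qed

theorem theorem2:
  fixes \<kappa> :: real and phi psi :: "real \<Rightarrow> real" and S :: "real set"
  assumes "0 < \<kappa>" and "\<kappa> < 1"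
    and "open S" and "0 \<in> S"
    and "phi 0 = 0" and "continuous_on S phi"
    and "\<forall>u\<in>S. uint \<kappa> (phi u) = u"
    and "psi 0 = 0" and "continuous_on S psi"
    and "\<forall>u\<in>S. sin (psi u) = \<kappa> * sin (phi u)"
  shows "\<forall>\<^sub>F u in nhds 0.
           ((\<lambda>v. cos (psi v)) has_real_derivative
              (- 2 * \<kappa> * sin (psi u / 2) * cos (phi u))) (at u)"
proof -
  \<comment> \<open>Near \<open>0\<close> we have \<open>\<bar>\<psi>\<bar> < pi/2\<close>, which makes \<open>cos \<psi>\<close> the positive root of \<open>1 - \<kappa>\<^sup>2 sin\<^sup>2 \<phi>\<close>.\<close>
  define T where "T = S \<inter> psi -` {-pi/2<..<pi/2}"
  have T: "open T" "0 \<in> T"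
    using assms(3,4,8,9) by (auto simp: T_def intro!: continuous_open_preimage)
  have "\<forall>\<^sub>F u in nhds 0. u \<in> T"
    using T eventually_nhds_in_open by blast
  then show ?thesis
  proof (rule eventually_mono)
    fix u assume "u \<in> T"
    then have "isCont phi u"
      using assms(3,6) by (simp add: T_def continuous_on_eq_continuous_at)
    then show "((\<lambda>v. cos (psi v)) has_real_derivative
                 - 2 * \<kappa> * sin (psi u / 2) * cos (phi u)) (at u)"
      using assms(1,2,7,10) \<open>u \<in> T\<close>
      by (intro has_real_derivative_cos_of_uint_inverse[OF _ T(1)]) (auto simp: T_def)
  qed
qed

end
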